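(* Let $f\in\Delta(\mathcal{G},\le)$, let $1\le\alpha\le\beta$, and suppose $f_\alpha\in\Delta(\mathcal{A},\le)$. Let $H,G_1,\dots,G_r$ be finite simple graphs and $q$ a positive integer such that $\widehat{H}\otimes\mathcal{C}_q\le\bigoplus_{d=1}^r\widehat{G_d}\otimes\mathcal{C}_d$. Then $f_\beta(\widehat{H}\otimes\mathcal{C}_q)\le f_\beta\big(\bigoplus_{d=1}^r\widehat{G_d}\otimes\mathcal{C}_d\big)$, i.e. $f(H)q^\beta\le\sum_{d=1}^r f(G_d)d^\beta$.
   Context: Graphs are finite simple undirected; $x\simeq x'$ means equal or adjacent. Strong product $G\boxtimes H$: vertex set $V(G)\times V(H)$, $(g,h)\simeq(g',h')$ iff $g\simeq g'$ and $h\simeq h'$. $\sqcup$ is disjoint union. $H\le G$ for graphs means there is a homomorphism from the complement of $H$ to the complement of $G$. $\mathcal{G}$ is the semiring of isomorphism classes of graphs with $\sqcup,\boxtimes$, and $\Delta(\mathcal{G},\le)$ is the set of maps $f$ from graphs to $\mathbb{R}_{\ge0}$ with $f(\text{empty graph})=0$, $f(K_1)=1$, $f(G\sqcup H)=f(G)+f(H)$, $f(G\boxtimes H)=f(G)f(H)$, and $H\le G\Rightarrow f(H)\le f(G)$. A noncommutative graph is a subspace $S\subseteq B(\mathcal{H})$ ($\mathcal{H}$ finite-dimensional complex Hilbert space) with $I\in S$, $S^*=S$; isomorphism is unitary conjugation. A cohomomorphism from $T\subseteq B(\mathcal{K})$ to $S\subseteq B(\mathcal{H})$ is a finite family of linear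 maps $E_i:\mathcal{K}\to\mathcal{H}$ with $\sum_iE_i^*E_i=I$ and $E_i^*SE_j\subseteq T$ for all $i,j$; write $T\le S$ if one exists. Tensor product and direct sum of noncommutative graphs are $\operatorname{span}\{A\otimes B\}$ and $\{A\oplus B\}$. For a graph $G$, $\widehat{G}=\operatorname{span}\{|x\rangle\langle x'|:x\simeq x'\}\subseteq B(\mathbb{C}^{V(G)})$; $\mathcal{C}_d=\mathbb{C}I\subseteq B(\mathbb{C}^d)$. $\mathcal{A}$ is the semiring (under $\oplus,\otimes$, isomorphism classes) generated by all $\widehat{G}$ and all $\mathcal{C}_d$; every element has the form $\bigoplus_{d=1}^r\widehat{G_d}\otimes\mathcal{C}_d$. For $f\in\Delta(\mathcal{G},\le)$ and $\alpha\ge1$, $f_\alpha:\mathcal{A}\to\mathbb{R}_{\ge0}$ is the semiring homomorphism $f_\alpha(\bigoplus_{d=1}^r\widehat{G_d}\otimes\mathcal{C}_d)=\sum_{d=1}^r f(G_d)d^\alpha$. $\Delta(\mathcal{A},\le)$ denotes the set of semiring homomorphisms $\mathcal{A}\to\mathbb{R}_{\ge0}$ that are monotone with respect to $\le$. *)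

theory Defs
  imports "HOL-Analysis.Analysis" "Jordan_Normal_Form.Schur_Decomposition"
begin

text \<open>A finite simple graph is represented as (n, E): vertex set {0..<n},
  adjacency relation E which is symmetric, irreflexive and vanishes outside {0..<n}.\<close>

type_synonym sgraph = "nat \<times> (nat \<Rightarrow> nat \<Rightarrow> bool)"

definition is_sgraph :: "sgraph \<Rightarrow> bool" where
  "is_sgraph G \<longleftrightarrow> (\<forall>x y. snd G x y \<longrightarrow> x < fst G \<and> y < fst G \<and> x \<noteq> y \<and> snd G y x)"

definition gsimeq :: "sgraph \<Rightarrow> nat \<Rightarrow> nat \<Rightarrow> bool" where
  "gsimeq G x y \<longleftrightarrow> x = y \<or> snd G x y"

definition gempty :: sgraph where "gempty = (0, \<lambda>_ _. False)"
definition gK1 :: sgraph where "gK1 = (1, \<lambda>_ _. False)"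

definition gdisj :: "sgraph \<Rightarrow> sgraph \<Rightarrow> sgraph" where
  "gdisj G H = (fst G + fst H,
     \<lambda>x y. (x < fst G \<and> y < fst G \<and> snd G x y) \<or>
           (fst G \<le> x \<and> fst G \<le> y \<and> snd H (x - fst G) (y - fst G)))"

text \<open>Strong product; vertex (g,h) is encoded as g * |V(H)| + h.\<close>
definition gstrong :: "sgraph \<Rightarrow> sgraph \<Rightarrow> sgraph" where
  "gstrong G H = (fst G * fst H,
     \<lambda>x y. x < fst G * fst H \<and> y < fst G * fst H \<and> x \<noteq> y \<and>
           gsimeq G (x div fst H) (y div fst H) \<and> gsimeq H (x mod fst H) (y mod fst H))"

text \<open>H \<le> G: there is a homomorphism from the complement of H to the complement of G.\<close>
definition gle :: "sgraph \<Rightarrow> sgraph \<Rightarrow> bool" where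
  "gle H G \<longleftrightarrow> (\<exists>\<phi>. (\<forall>x<fst H. \<phi> x < fst G) \<and>
     (\<forall>x<fst H. \<forall>y<fst H. x \<noteq> y \<and> \<not> snd H x y \<longrightarrow>
          \<phi> x \<noteq> \<phi> y \<and> \<not> snd G (\<phi> x) (\<phi> y)))"

definition Delta_G :: "(sgraph \<Rightarrow> real) \<Rightarrow> bool" where
  "Delta_G f \<longleftrightarrow>
     (\<forall>G. is_sgraph G \<longrightarrow> f G \<ge> 0) \<and>
     f gempty = 0 \<and> f gK1 = 1 \<and>
     (\<forall>G H. is_sgraph G \<longrightarrow> is_sgraph H \<longrightarrow> f (gdisj G H) = f G + f H) \<and>
     (\<forall>G H. is_sgraph G \<longrightarrow> is_sgraph H \<longrightarrow> f (gstrong G H) = f G * f H) \<and>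
     (\<forall>G H. is_sgraph G \<longrightarrow> is_sgraph H \<longrightarrow> gle H G \<longrightarrow> f H \<le> f G)"

text \<open>A noncommutative graph is given by its dimension N and a set of N x N complex
  matrices (a subspace of B(C^N)).\<close>

type_synonym ncgraph = "nat \<times> complex mat set"

definition cohom :: "ncgraph \<Rightarrow> ncgraph \<Rightarrow> complex mat list \<Rightarrow> bool" where
  "cohom T S Es \<longleftrightarrow>
     (\<forall>E\<in>set Es. E \<in> carrier_mat (fst S) (fst T)) \<and>
     foldr (\<lambda>E acc. mat_adjoint E * E + acc) Es (0\<^sub>m (fst T) (fst T)) = 1\<^sub>m (fst T) \<and>
     (\<forall>A\<in>snd S. \<forall>E\<in>set Es. \<forall>E'\<in>set Es. mat_adjoint E * A * E' \<in> snd T)"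

definition ncle :: "ncgraph \<Rightarrow> ncgraph \<Rightarrow> bool" where
  "ncle T S \<longleftrightarrow> (\<exists>Es. cohom T S Es)"

text \<open>Elements of the semiring A: a list Gs = [G_1,...,G_r] stands for
  \<Oplus>_{d=1}^r hat(G_d) \<otimes> C_d, acting on \<Oplus>_d C^{V(G_d)} \<otimes> C^d.
  Block d occupies indices off_d + x*d + k (x < |V(G_d)|, k < d).\<close>

definition A_dim :: "sgraph list \<Rightarrow> nat" where
  "A_dim Gs = (\<Sum>d\<in>{1..length Gs}. fst (Gs ! (d - 1)) * d)"

definition A_off :: "sgraph list \<Rightarrow> nat \<Rightarrow> nat" where
  "A_off Gs d = (\<Sum>d'\<in>{1..<d}. fst (Gs ! (d' - 1)) * d')"

text \<open>The generator |x><x'| \<otimes> I_d placed in block d.\<close>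
definition A_gen :: "sgraph list \<Rightarrow> nat \<Rightarrow> nat \<Rightarrow> nat \<Rightarrow> complex mat" where
  "A_gen Gs d x x' = mat (A_dim Gs) (A_dim Gs) (\<lambda>(i, j).
     if \<exists>k<d. i = A_off Gs d + x * d + k \<and> j = A_off Gs d + x' * d + k then 1 else 0)"

definition A_nc :: "sgraph list \<Rightarrow> ncgraph" where
  "A_nc Gs = (A_dim Gs,
     {A. \<exists>c :: nat \<Rightarrow> nat \<Rightarrow> nat \<Rightarrow> complex.
        A = mat (A_dim Gs) (A_dim Gs) (\<lambda>(i, j).
          \<Sum>d\<in>{1..length Gs}. \<Sum>x<fst (Gs ! (d - 1)). \<Sum>x'<fst (Gs ! (d - 1)).
             if gsimeq (Gs ! (d - 1)) x x' then c d x x' * A_gen Gs d x x' $$ (i, j) else 0)})"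

text \<open>hat(H) \<otimes> C_q, as the element with H in position q and empty graphs elsewhere.\<close>
definition hat_tensor_C :: "sgraph \<Rightarrow> nat \<Rightarrow> ncgraph" where
  "hat_tensor_C H q = A_nc (replicate (q - 1) gempty @ [H])"

definition f_alpha :: "(sgraph \<Rightarrow> real) \<Rightarrow> real \<Rightarrow> sgraph list \<Rightarrow> real" where
  "f_alpha f \<alpha> Gs = (\<Sum>d\<in>{1..length Gs}. f (Gs ! (d - 1)) * real d powr \<alpha>)"

definition f_alpha_in_Delta_A :: "(sgraph \<Rightarrow> real) \<Rightarrow> real \<Rightarrow> bool" where
  "f_alpha_in_Delta_A f \<alpha> \<longleftrightarrow>
     (\<forall>Gs1 Gs2. (\<forall>G\<in>set Gs1. is_sgraph G) \<longrightarrow> (\<forall>G\<in>set Gs2. is_sgraph G) \<longrightarrow>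
        ncle (A_nc Gs1) (A_nc Gs2) \<longrightarrow> f_alpha f \<alpha> Gs1 \<le> f_alpha f \<alpha> Gs2)"

end

theory Submission
  imports Defs
begin

(* Let E_i be a cohomomorphism from hat(H) (x) C_q into the direct sum of the hat(G_d) (x) C_d.
   Compressing a generator |x><x| (x) I_d of a block with d < q gives E_i^* (|x><x| (x) I_d) E_j in
   hat(H) (x) C_q, whose diagonal q x q blocks are scalar multiples of the identity. Such a block
   is the Gram matrix of q vectors in C^d, and for q > d a scalar Gram matrix must vanish. So every
   E_i is zero on the blocks with d < q, and deleting these rows yields a cohomomorphism into the
   element in which G_d has been replaced by the empty graph for all d < q. Monotonicity of f_alpha
   gives f(H) q^alpha <= sum_{d >= q} f(G_d) d^alpha, and q^(beta - alpha) <= d^(beta - alpha)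
   for d >= q turns this into the claim. *)

section \<open>Matrices\<close>

lemma mat_adjoint_dim [simp]:
  "dim_row (mat_adjoint A) = dim_col A" "dim_col (mat_adjoint A) = dim_row A"
  by (auto simp: mat_adjoint_def)

lemma mat_adjoint_index [simp]:
  "i < dim_col A \<Longrightarrow> j < dim_row A \<Longrightarrow> mat_adjoint A $$ (i, j) = conjugate (A $$ (j, i))"
  unfolding mat_adjoint_def mat_of_rows_def by simp

lemma mat_adjoint_carrier: "A \<in> carrier_mat n m \<Longrightarrow> mat_adjoint A \<in> carrier_mat m n"
  by auto

lemma index_mult_mat_triple:
  fixes X Y Z :: "'a::comm_semiring_0 mat"
  assumes "X \<in> carrier_mat n1 n2" "Y \<in> carrier_mat n2 n3" "Z \<in> carrier_mat n3 n4"
    and "a < n1" "b < n4"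
  shows "(X * Y * Z) $$ (a, b) = (\<Sum>j<n3. (\<Sum>i<n2. X $$ (a, i) * Y $$ (i, j)) * Z $$ (j, b))"
proof -
  have "(X * Y * Z) $$ (a, b) = (\<Sum>j<n3. (X * Y) $$ (a, j) * Z $$ (j, b))"
    using assms by (subst index_mult_mat) (auto simp: scalar_prod_def atLeast0LessThan)
  also have "\<dots> = (\<Sum>j<n3. (\<Sum>i<n2. X $$ (a, i) * Y $$ (i, j)) * Z $$ (j, b))"
    using assms by (intro sum.cong refl) (auto simp: scalar_prod_def atLeast0LessThan)
  finally show ?thesis .
qed

lemma index_adjoint_mult_self:
  assumes "E \<in> carrier_mat n m" "a < m" "b < m"
  shows "(mat_adjoint E * E) $$ (a, b) = (\<Sum>i<n. conjugate (E $$ (i, a)) * E $$ (i, b))"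
  using assms by (auto simp: scalar_prod_def atLeast0LessThan)

lemma index_adjoint_mult_proj_mult:
  fixes E G :: "'a::conjugatable_field mat"
  assumes E: "E \<in> carrier_mat N m" and G: "G \<in> carrier_mat N N" and I: "I \<subseteq> {..<N}"
    and "\<And>i j. i < N \<Longrightarrow> j < N \<Longrightarrow> G $$ (i, j) = (if i = j \<and> i \<in> I then 1 else 0)"
    and "a < m" "b < m"
  shows "(mat_adjoint E * G * E) $$ (a, b) = (\<Sum>i\<in>I. conjugate (E $$ (i, a)) * E $$ (i, b))"
proof -
  have "(mat_adjoint E * G * E) $$ (a, b)
      = (\<Sum>j<N. (\<Sum>i<N. mat_adjoint E $$ (a, i) * G $$ (i, j)) * E $$ (j, b))"
    using assms by (intro index_mult_mat_triple[OF mat_adjoint_carrier G]) auto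
  also have "\<dots> = (\<Sum>j<N. if j \<in> I then conjugate (E $$ (j, a)) * E $$ (j, b) else 0)"
  proof (intro sum.cong refl)
    fix j assume "j \<in> {..<N}"
    then have "(\<Sum>i<N. mat_adjoint E $$ (a, i) * G $$ (i, j))
        = (\<Sum>i<N. if i = j then (if j \<in> I then conjugate (E $$ (j, a)) else 0) else 0)"
      using assms by (intro sum.cong refl) auto
    then show "(\<Sum>i<N. mat_adjoint E $$ (a, i) * G $$ (i, j)) * E $$ (j, b)
        = (if j \<in> I then conjugate (E $$ (j, a)) * E $$ (j, b) else 0)"
      using \<open>j \<in> {..<N}\<close> by simp
  qed
  also have "\<dots> = (\<Sum>i\<in>I. conjugate (E $$ (i, a)) * E $$ (i, b))"
    using I by (simp add: sum.If_cases Int_absorb1)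
  finally show ?thesis .
qed

lemma det_zero_row:
  fixes W :: "'a::comm_ring_1 mat"
  assumes "W \<in> carrier_mat n n" "r < n" "\<And>j. j < n \<Longrightarrow> W $$ (r, j) = 0"
  shows "det W = 0"
proof -
  have "(\<Prod>i = 0..<n. W $$ (i, p i)) = 0" if "p permutes {0..<n}" for p
    using assms that by (intro prod_zero bexI[of _ r]) (auto simp: permutes_in_image)
  then show ?thesis
    using assms unfolding det_def by simp
qed

lemma sum_cnj_mult_self_eq_0_iff:
  fixes e :: "nat \<Rightarrow> complex"
  shows "(\<Sum>k<d. cnj (e k) * e k) = 0 \<longleftrightarrow> (\<forall>k<d. e k = 0)"
proof -
  have norms: "(\<Sum>k<d. cnj (e k) * e k) = of_real (\<Sum>k<d. (cmod (e k))\<^sup>2)"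
    unfolding of_real_sum using complex_norm_square by (simp add: mult.commute)
  show ?thesis
    unfolding norms of_real_eq_0_iff by (auto simp: sum_nonneg_eq_0_iff)
qed

lemma scalar_gram_with_zero_row:
  fixes W :: "complex mat"
  assumes W: "W \<in> carrier_mat q q" and "r < q" and "\<And>j. j < q \<Longrightarrow> W $$ (r, j) = 0"
    and gram: "mat_adjoint W * W = c \<cdot>\<^sub>m 1\<^sub>m q"
  shows "W = 0\<^sub>m q q"
proof -
  have "c ^ q = det (mat_adjoint W) * det W"
    using gram det_mult[OF mat_adjoint_carrier[OF W] W] by simp
  then have "c = 0"
    using det_zero_row[OF assms(1-3)] by simp
  show ?thesis
  proof (rule eq_matI)
    fix i j assume ij: "i < dim_row (0\<^sub>m q q)" "j < dim_col (0\<^sub>m q q :: complex mat)"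
    have "(\<Sum>k<q. cnj (W $$ (k, j)) * W $$ (k, j)) = (mat_adjoint W * W) $$ (j, j)"
      using index_adjoint_mult_self[OF W] ij by simp
    also have "\<dots> = 0"
      using gram \<open>c = 0\<close> ij by simp
    finally show "W $$ (i, j) = 0\<^sub>m q q $$ (i, j)"
      using ij by (simp add: sum_cnj_mult_self_eq_0_iff)
  qed (use W in auto)
qed

lemma sum_lessThan_skip_zero_prefix:
  fixes f :: "nat \<Rightarrow> 'a::comm_monoid_add"
  assumes "P \<le> N" "\<And>i. i < P \<Longrightarrow> f i = 0"
  shows "(\<Sum>i<N. f i) = (\<Sum>i<N - P. f (i + P))"
proof -
  have "(\<Sum>i<N. f i) = (\<Sum>i<P. f i) + (\<Sum>i\<in>{P..<N}. f i)"
    using assms(1) by (metis sum.atLeastLessThan_concat le0 lessThan_atLeast0)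
  also have "\<dots> = (\<Sum>i<N - P. f (i + P))"
    using assms sum.shift_bounds_nat_ivl[of f 0 P "N - P"] by (simp add: lessThan_atLeast0 add.commute)
  finally show ?thesis .
qed

definition drop_rows :: "nat \<Rightarrow> 'a mat \<Rightarrow> 'a mat" where
  "drop_rows P E = mat (dim_row E - P) (dim_col E) (\<lambda>(i, j). E $$ (i + P, j))"

definition embed_lower_right :: "nat \<Rightarrow> nat \<Rightarrow> 'a::zero mat \<Rightarrow> 'a mat" where
  "embed_lower_right N P A = mat N N (\<lambda>(i, j). if P \<le> i \<and> P \<le> j then A $$ (i - P, j - P) else 0)"

lemma drop_rows_carrier: "E \<in> carrier_mat N m \<Longrightarrow> drop_rows P E \<in> carrier_mat (N - P) m"
  by (simp add: drop_rows_def)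

lemma adjoint_drop_rows_mult_self:
  fixes E :: "'a::conjugatable_field mat"
  assumes E: "E \<in> carrier_mat N m" and "P \<le> N"
    and "\<And>i a. i < P \<Longrightarrow> a < m \<Longrightarrow> E $$ (i, a) = 0"
  shows "mat_adjoint (drop_rows P E) * drop_rows P E = mat_adjoint E * E"
proof (rule eq_matI)
  fix a b assume "a < dim_row (mat_adjoint E * E)" "b < dim_col (mat_adjoint E * E)"
  then have ab: "a < m" "b < m"
    using E by auto
  have "(mat_adjoint E * E) $$ (a, b) = (\<Sum>i<N. conjugate (E $$ (i, a)) * E $$ (i, b))"
    using index_adjoint_mult_self[OF E ab] .
  also have "\<dots> = (\<Sum>i<N - P. conjugate (E $$ (i + P, a)) * E $$ (i + P, b))"
    using assms ab by (intro sum_lessThan_skip_zero_prefix) auto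
  also have "\<dots> = (mat_adjoint (drop_rows P E) * drop_rows P E) $$ (a, b)"
    using index_adjoint_mult_self[OF drop_rows_carrier[OF E] ab] E ab
    by (auto simp: drop_rows_def intro!: sum.cong)
  finally show "(mat_adjoint (drop_rows P E) * drop_rows P E) $$ (a, b) = (mat_adjoint E * E) $$ (a, b)"
    by simp
qed (use E in \<open>auto simp: drop_rows_def\<close>)

lemma adjoint_drop_rows_mult:
  fixes E1 E2 A :: "'a::conjugatable_field mat"
  assumes E1: "E1 \<in> carrier_mat N m" and E2: "E2 \<in> carrier_mat N m"
    and A: "A \<in> carrier_mat (N - P) (N - P)" and "P \<le> N"
  shows "mat_adjoint (drop_rows P E1) * A * drop_rows P E2
       = mat_adjoint E1 * embed_lower_right N P A * E2"
proof (rule eq_matI)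
  let ?A' = "embed_lower_right N P A"
  have A': "?A' \<in> carrier_mat N N"
    by (simp add: embed_lower_right_def)
  fix a b assume "a < dim_row (mat_adjoint E1 * ?A' * E2)" "b < dim_col (mat_adjoint E1 * ?A' * E2)"
  then have ab: "a < m" "b < m"
    using E1 E2 by auto
  have inner: "(\<Sum>i<N. mat_adjoint E1 $$ (a, i) * ?A' $$ (i, j))
      = (if P \<le> j then (\<Sum>i<N - P. conjugate (E1 $$ (i + P, a)) * A $$ (i, j - P)) else 0)"
    if "j < N" for j
  proof -
    have "(\<Sum>i<N. mat_adjoint E1 $$ (a, i) * ?A' $$ (i, j))
        = (\<Sum>i<N - P. mat_adjoint E1 $$ (a, i + P) * ?A' $$ (i + P, j))"
      using assms that by (intro sum_lessThan_skip_zero_prefix) (auto simp: embed_lower_right_def)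
    then show ?thesis
      using assms ab that by (auto simp: embed_lower_right_def intro!: sum.cong)
  qed
  have "(mat_adjoint E1 * ?A' * E2) $$ (a, b)
      = (\<Sum>j<N. (\<Sum>i<N. mat_adjoint E1 $$ (a, i) * ?A' $$ (i, j)) * E2 $$ (j, b))"
    by (rule index_mult_mat_triple[OF mat_adjoint_carrier[OF E1] A' E2 ab])
  also have "\<dots> = (\<Sum>j<N - P. (\<Sum>i<N - P. conjugate (E1 $$ (i + P, a)) * A $$ (i, j)) * E2 $$ (j + P, b))"
    using assms by (simp add: inner sum_lessThan_skip_zero_prefix[of P N])
  also have "\<dots> = (mat_adjoint (drop_rows P E1) * A * drop_rows P E2) $$ (a, b)"
    using index_mult_mat_triple[OF mat_adjoint_carrier[OF drop_rows_carrier[OF E1]] A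
        drop_rows_carrier[OF E2] ab] E1 E2 ab
    by (auto simp: drop_rows_def intro!: sum.cong)
  finally show "(mat_adjoint (drop_rows P E1) * A * drop_rows P E2) $$ (a, b)
      = (mat_adjoint E1 * ?A' * E2) $$ (a, b)"
    by simp
qed (use E1 E2 A in \<open>auto simp: drop_rows_def\<close>)

section \<open>Block structure of the semiring elements\<close>

lemma A_off_Suc: "A_off Gs (Suc d) = A_off Gs d + fst (Gs ! (d - 1)) * d"
  unfolding A_off_def by (cases d) (simp_all add: atLeastLessThanSuc add.commute)

lemma A_off_mono: "d \<le> d' \<Longrightarrow> A_off Gs d \<le> A_off Gs d'"
  unfolding A_off_def by (rule sum_mono2) auto

lemma A_dim_eq_A_off: "A_dim Gs = A_off Gs (Suc (length Gs))"
  unfolding A_off_def A_dim_def by (simp add: atLeastLessThanSuc_atLeastAtMost)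

lemma block_index_lt_A_off_Suc:
  assumes "x < fst (Gs ! (d - 1))" "k < d"
  shows "A_off Gs d + x * d + k < A_off Gs (Suc d)"
proof -
  have "x * d + k < (x + 1) * d"
    using assms by simp
  also have "\<dots> \<le> fst (Gs ! (d - 1)) * d"
    using assms by (intro mult_right_mono) auto
  finally show ?thesis
    by (simp add: A_off_Suc)
qed

lemma block_index_lt_A_dim:
  assumes "d \<le> length Gs" "x < fst (Gs ! (d - 1))" "k < d"
  shows "A_off Gs d + x * d + k < A_dim Gs"
  using block_index_lt_A_off_Suc[OF assms(2,3)] A_off_mono[of "Suc d" "Suc (length Gs)" Gs] assms(1)
  by (simp add: A_dim_eq_A_off)

lemma block_index_inj:
  assumes "x < fst (Gs ! (d - 1))" "k < d" "x' < fst (Gs ! (d' - 1))" "k' < d'"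
    and eq: "A_off Gs d + x * d + k = A_off Gs d' + x' * d' + k'"
  shows "d = d' \<and> x = x' \<and> k = k'"
proof -
  have earlier_block: "\<not> d1 < d2"
    if "x1 < fst (Gs ! (d1 - 1))" "k1 < d1" "A_off Gs d1 + x1 * d1 + k1 = A_off Gs d2 + x2 * d2 + k2"
    for d1 d2 x1 x2 k1 k2
  proof
    assume "d1 < d2"
    then have "A_off Gs (Suc d1) \<le> A_off Gs d2"
      by (intro A_off_mono) simp
    then show False
      using block_index_lt_A_off_Suc[OF that(1,2)] that(3) by linarith
  qed
  have "d = d'"
    using earlier_block[OF assms(1,2) eq] earlier_block[OF assms(3,4) eq[symmetric]] by simp
  then have "x * d + k = x' * d + k'"
    using eq by simp
  then have "(x * d + k) div d = (x' * d + k') div d \<and> (x * d + k) mod d = (x' * d + k') mod d"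
    by simp
  then show ?thesis
    using \<open>d = d'\<close> assms(2,4) by simp
qed

lemma block_index_cases:
  assumes "i < A_off Gs D"
  obtains d x k where "1 \<le> d" "d < D" "x < fst (Gs ! (d - 1))" "k < d"
    "i = A_off Gs d + x * d + k"
  using assms
proof (induction D arbitrary: thesis)
  case 0
  then show ?case
    by (simp add: A_off_def)
next
  case (Suc D)
  show ?case
  proof (cases "i < A_off Gs D")
    case True
    show ?thesis
      by (rule Suc.IH[OF _ True], rule Suc.prems(1)) auto
  next
    case False
    define j where "j = i - A_off Gs D"
    have j: "j < fst (Gs ! (D - 1)) * D"
      using False Suc.prems(2) unfolding j_def A_off_Suc by simp
    then have "1 \<le> D"
      by (cases D) auto
    moreover have "j div D < fst (Gs ! (D - 1))"
      using j by (simp add: less_mult_imp_div_less)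
    moreover have "i = A_off Gs D + (j div D) * D + j mod D"
      using False unfolding j_def by simp
    ultimately show ?thesis
      by (intro Suc.prems(1)[of D "j div D" "j mod D"]) auto
  qed
qed

lemma A_gen_index:
  "i < A_dim Gs \<Longrightarrow> j < A_dim Gs \<Longrightarrow> A_gen Gs d x x' $$ (i, j) =
     (if \<exists>k<d. i = A_off Gs d + x * d + k \<and> j = A_off Gs d + x' * d + k then 1 else 0)"
  unfolding A_gen_def by simp

lemma A_gen_index_block:
  assumes "d \<le> length Gs" "x < fst (Gs ! (d - 1))" "x' < fst (Gs ! (d - 1))" "k < d" "k' < d"
    and "x1 < fst (Gs ! (d' - 1))" "x2 < fst (Gs ! (d' - 1))"
  shows "A_gen Gs d' x1 x2 $$ (A_off Gs d + x * d + k, A_off Gs d + x' * d + k')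
       = (if d' = d \<and> x1 = x \<and> x2 = x' \<and> k = k' then 1 else 0)"
proof -
  have "d' = d \<and> x1 = x \<and> x2 = x' \<and> k = k'"
    if "k0 < d'" "A_off Gs d + x * d + k = A_off Gs d' + x1 * d' + k0"
      "A_off Gs d + x' * d + k' = A_off Gs d' + x2 * d' + k0" for k0
    using block_index_inj[OF assms(2,4,6) that(1,2)] block_index_inj[OF assms(3,5,7) that(1,3)]
    by simp
  then have "(\<exists>k0<d'. A_off Gs d + x * d + k = A_off Gs d' + x1 * d' + k0
               \<and> A_off Gs d + x' * d + k' = A_off Gs d' + x2 * d' + k0)
      \<longleftrightarrow> d' = d \<and> x1 = x \<and> x2 = x' \<and> k = k'"
    using assms(4) by blast
  then show ?thesis
    using assms by (simp add: A_gen_index block_index_lt_A_dim)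
qed

lemma A_gen_dim [simp]: "dim_row (A_gen Gs d x x') = A_dim Gs" "dim_col (A_gen Gs d x x') = A_dim Gs"
  by (simp_all add: A_gen_def)

lemma A_gen_diag_index:
  assumes "d \<le> length Gs" "x < fst (Gs ! (d - 1))" "i < A_dim Gs" "j < A_dim Gs"
  shows "A_gen Gs d x x $$ (i, j)
       = (if i = j \<and> i \<in> {A_off Gs d + x * d..<A_off Gs d + x * d + d} then 1 else 0)"
proof -
  have "(\<exists>k<d. i = A_off Gs d + x * d + k \<and> j = A_off Gs d + x * d + k)
      \<longleftrightarrow> i = j \<and> i \<in> {A_off Gs d + x * d..<A_off Gs d + x * d + d}"
    by (auto intro: exI[of _ "i - (A_off Gs d + x * d)"])
  then show ?thesis
    using assms by (simp add: A_gen_index)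
qed

lemma sum_block_coords_delta:
  fixes Gs :: "sgraph list"
  assumes "1 \<le> d" "d \<le> length Gs" "x < fst (Gs ! (d - 1))" "x' < fst (Gs ! (d - 1))"
  shows "(\<Sum>d'\<in>{1..length Gs}. \<Sum>x1<fst (Gs ! (d' - 1)). \<Sum>x2<fst (Gs ! (d' - 1)).
           if d' = d \<and> x1 = x \<and> x2 = x' then v else 0) = v"
proof -
  have "(\<Sum>x2<fst (Gs ! (d' - 1)). if d' = d \<and> x1 = x \<and> x2 = x' then v else 0)
      = (if d' = d \<and> x1 = x then v else 0)" for d' x1
  proof (cases "d' = d \<and> x1 = x")
    case True
    then show ?thesis
      using assms(4) by (simp add: sum.delta)
  next
    case False
    then show ?thesis
      by auto
  qed
  moreover have "(\<Sum>x1<fst (Gs ! (d' - 1)). if d' = d \<and> x1 = x then v else 0)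
      = (if d' = d then v else 0)" for d'
    using assms(3) by (cases "d' = d") (simp_all add: sum.delta)
  ultimately show ?thesis
    using assms(1,2) by (simp add: sum.delta)
qed

lemma A_gen_diag_in_A_nc:
  assumes "1 \<le> d" "d \<le> length Gs" "x < fst (Gs ! (d - 1))"
  shows "A_gen Gs d x x \<in> snd (A_nc Gs)"
proof -
  let ?c = "\<lambda>d' x1 x2. if d' = d \<and> x1 = x \<and> x2 = x then (1::complex) else 0"
  have entries: "(\<Sum>d'\<in>{1..length Gs}. \<Sum>x1<fst (Gs ! (d' - 1)). \<Sum>x2<fst (Gs ! (d' - 1)).
          if gsimeq (Gs ! (d' - 1)) x1 x2 then ?c d' x1 x2 * A_gen Gs d' x1 x2 $$ (i, j) else 0)
      = A_gen Gs d x x $$ (i, j)" for i j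
  proof -
    have "(\<Sum>d'\<in>{1..length Gs}. \<Sum>x1<fst (Gs ! (d' - 1)). \<Sum>x2<fst (Gs ! (d' - 1)).
          if gsimeq (Gs ! (d' - 1)) x1 x2 then ?c d' x1 x2 * A_gen Gs d' x1 x2 $$ (i, j) else 0)
      = (\<Sum>d'\<in>{1..length Gs}. \<Sum>x1<fst (Gs ! (d' - 1)). \<Sum>x2<fst (Gs ! (d' - 1)).
          if d' = d \<and> x1 = x \<and> x2 = x then A_gen Gs d x x $$ (i, j) else 0)"
      by (intro sum.cong refl) (auto simp: gsimeq_def)
    also have "\<dots> = A_gen Gs d x x $$ (i, j)"
      by (rule sum_block_coords_delta[OF assms assms(3)])
    finally show ?thesis .
  qed
  have "mat (A_dim Gs) (A_dim Gs) (\<lambda>(i, j).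
      \<Sum>d'\<in>{1..length Gs}. \<Sum>x1<fst (Gs ! (d' - 1)). \<Sum>x2<fst (Gs ! (d' - 1)).
        if gsimeq (Gs ! (d' - 1)) x1 x2 then ?c d' x1 x2 * A_gen Gs d' x1 x2 $$ (i, j) else 0)
      = mat (A_dim Gs) (A_dim Gs) (\<lambda>(i, j). A_gen Gs d x x $$ (i, j))"
    by (simp only: entries)
  also have "\<dots> = A_gen Gs d x x"
    by (rule eq_matI) auto
  finally have "A_gen Gs d x x = mat (A_dim Gs) (A_dim Gs) (\<lambda>(i, j).
      \<Sum>d'\<in>{1..length Gs}. \<Sum>x1<fst (Gs ! (d' - 1)). \<Sum>x2<fst (Gs ! (d' - 1)).
        if gsimeq (Gs ! (d' - 1)) x1 x2 then ?c d' x1 x2 * A_gen Gs d' x1 x2 $$ (i, j) else 0)"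
    by (rule sym)
  then show ?thesis
    unfolding A_nc_def snd_conv mem_Collect_eq by (rule exI[of _ ?c])
qed

lemma A_nc_diag_block_scalar:
  assumes M: "M \<in> snd (A_nc Gs)" and d: "1 \<le> d" "d \<le> length Gs" and x: "x < fst (Gs ! (d - 1))"
  obtains c where "\<And>k k'. k < d \<Longrightarrow> k' < d \<Longrightarrow>
    M $$ (A_off Gs d + x * d + k, A_off Gs d + x * d + k') = (if k = k' then c else 0)"
proof -
  obtain c where c: "M = mat (A_dim Gs) (A_dim Gs) (\<lambda>(i, j).
      \<Sum>d'\<in>{1..length Gs}. \<Sum>x1<fst (Gs ! (d' - 1)). \<Sum>x2<fst (Gs ! (d' - 1)).
        if gsimeq (Gs ! (d' - 1)) x1 x2 then c d' x1 x2 * A_gen Gs d' x1 x2 $$ (i, j) else 0)"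
    using M unfolding A_nc_def by auto
  have "M $$ (A_off Gs d + x * d + k, A_off Gs d + x * d + k') = (if k = k' then c d x x else 0)"
    if k: "k < d" "k' < d" for k k'
  proof -
    let ?i = "A_off Gs d + x * d + k" and ?j = "A_off Gs d + x * d + k'"
    have "M $$ (?i, ?j) = (\<Sum>d'\<in>{1..length Gs}. \<Sum>x1<fst (Gs ! (d' - 1)). \<Sum>x2<fst (Gs ! (d' - 1)).
        if gsimeq (Gs ! (d' - 1)) x1 x2 then c d' x1 x2 * A_gen Gs d' x1 x2 $$ (?i, ?j) else 0)"
      using d x k by (simp add: c block_index_lt_A_dim)
    also have "\<dots> = (\<Sum>d'\<in>{1..length Gs}. \<Sum>x1<fst (Gs ! (d' - 1)). \<Sum>x2<fst (Gs ! (d' - 1)).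
        if d' = d \<and> x1 = x \<and> x2 = x then (if k = k' then c d x x else 0) else 0)"
    proof (intro sum.cong refl)
      fix d' x1 x2 assume "x1 \<in> {..<fst (Gs ! (d' - 1))}" "x2 \<in> {..<fst (Gs ! (d' - 1))}"
      then have "A_gen Gs d' x1 x2 $$ (?i, ?j) = (if d' = d \<and> x1 = x \<and> x2 = x \<and> k = k' then 1 else 0)"
        using A_gen_index_block[OF d(2) x x k] by simp
      then show "(if gsimeq (Gs ! (d' - 1)) x1 x2 then c d' x1 x2 * A_gen Gs d' x1 x2 $$ (?i, ?j) else 0)
          = (if d' = d \<and> x1 = x \<and> x2 = x then (if k = k' then c d x x else 0) else 0)"
        by (auto simp: gsimeq_def)
    qed
    also have "\<dots> = (if k = k' then c d x x else 0)"
      by (rule sum_block_coords_delta[OF d x x])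
    finally show ?thesis .
  qed
  then show ?thesis
    using that by blast
qed

section \<open>Cohomomorphisms out of \<open>hat H \<otimes> C_q\<close>\<close>

definition hat_tensor_C_blocks :: "sgraph \<Rightarrow> nat \<Rightarrow> sgraph list" where
  "hat_tensor_C_blocks H q = replicate (q - 1) gempty @ [H]"

lemma hat_tensor_C_eq_A_nc: "hat_tensor_C H q = A_nc (hat_tensor_C_blocks H q)"
  by (simp add: hat_tensor_C_def hat_tensor_C_blocks_def)

lemma length_hat_tensor_C_blocks: "0 < q \<Longrightarrow> length (hat_tensor_C_blocks H q) = q"
  by (simp add: hat_tensor_C_blocks_def)

lemma hat_tensor_C_blocks_nth:
  "1 \<le> d \<Longrightarrow> d \<le> q \<Longrightarrow> hat_tensor_C_blocks H q ! (d - 1) = (if d = q then H else gempty)"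
  by (auto simp: hat_tensor_C_blocks_def nth_append)

lemma A_off_hat_tensor_C_blocks: "A_off (hat_tensor_C_blocks H q) q = 0"
  unfolding A_off_def
proof (intro sum.neutral ballI)
  fix d assume "d \<in> {1..<q}"
  then show "fst (hat_tensor_C_blocks H q ! (d - 1)) * d = 0"
    using hat_tensor_C_blocks_nth[of d q H] by (simp add: gempty_def)
qed

lemma fst_hat_tensor_C: "0 < q \<Longrightarrow> fst (hat_tensor_C H q) = fst H * q"
  using A_off_Suc[of "hat_tensor_C_blocks H q" q] hat_tensor_C_blocks_nth[of q q H]
  by (simp add: hat_tensor_C_eq_A_nc A_nc_def A_dim_eq_A_off length_hat_tensor_C_blocks
      A_off_hat_tensor_C_blocks)

lemma hat_tensor_C_diag_block_scalar:
  assumes "0 < q" "M \<in> snd (hat_tensor_C H q)" "y < fst H"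
  obtains c where "\<And>l l'. l < q \<Longrightarrow> l' < q \<Longrightarrow> M $$ (y * q + l, y * q + l') = (if l = l' then c else 0)"
proof -
  have "hat_tensor_C_blocks H q ! (q - 1) = H"
    using assms(1) hat_tensor_C_blocks_nth[of q q H] by simp
  then show ?thesis
    using A_nc_diag_block_scalar[of M "hat_tensor_C_blocks H q" q y] assms that
    by (auto simp: hat_tensor_C_eq_A_nc length_hat_tensor_C_blocks A_off_hat_tensor_C_blocks)
qed

lemma index_adjoint_A_gen_mult:
  fixes E :: "complex mat"
  assumes E: "E \<in> carrier_mat (A_dim Gs) m" and d: "d \<le> length Gs"
    and x: "x < fst (Gs ! (d - 1))" and "a < m" "b < m"
  shows "(mat_adjoint E * A_gen Gs d x x * E) $$ (a, b)
       = (\<Sum>k<d. cnj (E $$ (A_off Gs d + x * d + k, a)) * E $$ (A_off Gs d + x * d + k, b))"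
proof -
  let ?p = "A_off Gs d + x * d"
  have "i < A_dim Gs" if "i \<in> {?p..<?p + d}" for i
    using that block_index_lt_A_dim[OF d x, of "i - ?p"] by auto
  then have "{?p..<?p + d} \<subseteq> {..<A_dim Gs}"
    by auto
  then have "(mat_adjoint E * A_gen Gs d x x * E) $$ (a, b)
      = (\<Sum>i\<in>{?p..<?p + d}. conjugate (E $$ (i, a)) * E $$ (i, b))"
    using assms by (intro index_adjoint_mult_proj_mult) (auto simp: A_gen_diag_index)
  also have "\<dots> = (\<Sum>k<d. cnj (E $$ (?p + k, a)) * E $$ (?p + k, b))"
    using sum.shift_bounds_nat_ivl[of "\<lambda>i. cnj (E $$ (i, a)) * E $$ (i, b)" 0 ?p d]
    by (simp add: lessThan_atLeast0 add.commute)
  finally show ?thesis .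
qed

lemma cohom_hat_tensor_C_block_gram:
  assumes coh: "cohom (hat_tensor_C H q) (A_nc Gs) Es" and E: "E \<in> set Es" and q: "0 < q"
    and d: "1 \<le> d" "d \<le> length Gs" and x: "x < fst (Gs ! (d - 1))" and y: "y < fst H"
  obtains c where "\<And>l l'. l < q \<Longrightarrow> l' < q \<Longrightarrow>
    (\<Sum>k<d. cnj (E $$ (A_off Gs d + x * d + k, y * q + l)) * E $$ (A_off Gs d + x * d + k, y * q + l'))
      = (if l = l' then c else 0)"
proof -
  have E_carrier: "E \<in> carrier_mat (A_dim Gs) (fst H * q)"
    using coh E fst_hat_tensor_C[OF q] unfolding cohom_def A_nc_def by auto
  have row_in_block: "y * q + l < fst H * q" if "l < q" for l
  proof -
    have "y * q + l < (y + 1) * q"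
      using that by simp
    also have "\<dots> \<le> fst H * q"
      using y by (intro mult_right_mono) auto
    finally show ?thesis .
  qed
  define M where "M = mat_adjoint E * A_gen Gs d x x * E"
  have "M \<in> snd (hat_tensor_C H q)"
    using coh E A_gen_diag_in_A_nc[OF d x] unfolding cohom_def M_def by blast
  then obtain c where c: "\<And>l l'. l < q \<Longrightarrow> l' < q \<Longrightarrow> M $$ (y * q + l, y * q + l') = (if l = l' then c else 0)"
    using hat_tensor_C_diag_block_scalar[OF q _ y] by blast
  show ?thesis
  proof (rule that[of c])
    fix l l' assume l: "l < q" "l' < q"
    then show "(\<Sum>k<d. cnj (E $$ (A_off Gs d + x * d + k, y * q + l)) * E $$ (A_off Gs d + x * d + k, y * q + l'))
        = (if l = l' then c else 0)"
      using c[OF l] index_adjoint_A_gen_mult[OF E_carrier d(2) x row_in_block row_in_block]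
      unfolding M_def by simp
  qed
qed

lemma cohom_hat_tensor_C_small_block_zero:
  assumes coh: "cohom (hat_tensor_C H q) (A_nc Gs) Es" and E: "E \<in> set Es"
    and d: "1 \<le> d" "d < q" "d \<le> length Gs" and x: "x < fst (Gs ! (d - 1))" and "k < d"
    and a: "a < fst H * q"
  shows "E $$ (A_off Gs d + x * d + k, a) = 0"
proof -
  let ?p = "A_off Gs d + x * d"
  have q: "0 < q"
    using d by simp
  define y where "y = a div q"
  have "y < fst H"
    using a by (simp add: y_def less_mult_imp_div_less)
  then obtain c where c: "\<And>l l'. l < q \<Longrightarrow> l' < q \<Longrightarrow>
      (\<Sum>k<d. cnj (E $$ (?p + k, y * q + l)) * E $$ (?p + k, y * q + l')) = (if l = l' then c else 0)"
    using cohom_hat_tensor_C_block_gram[OF coh E q d(1,3) x] by blast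
  define W where "W = mat q q (\<lambda>(k, l). if k < d then E $$ (?p + k, y * q + l) else 0)"
  have W_carrier: "W \<in> carrier_mat q q"
    by (simp add: W_def)
  have "mat_adjoint W * W = c \<cdot>\<^sub>m 1\<^sub>m q"
  proof (rule eq_matI)
    fix i j assume "i < dim_row (c \<cdot>\<^sub>m 1\<^sub>m q)" "j < dim_col (c \<cdot>\<^sub>m (1\<^sub>m q :: complex mat))"
    then have ij: "i < q" "j < q"
      by auto
    have "(mat_adjoint W * W) $$ (i, j) = (\<Sum>k<q. cnj (W $$ (k, i)) * W $$ (k, j))"
      using index_adjoint_mult_self[OF W_carrier ij] by simp
    also have "\<dots> = (\<Sum>k<q. if k < d then cnj (E $$ (?p + k, y * q + i)) * E $$ (?p + k, y * q + j) else 0)"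
      using ij by (intro sum.cong) (auto simp: W_def)
    also have "\<dots> = (\<Sum>k<d. cnj (E $$ (?p + k, y * q + i)) * E $$ (?p + k, y * q + j))"
      using d by (intro sum.mono_neutral_cong_right) auto
    also have "\<dots> = (c \<cdot>\<^sub>m 1\<^sub>m q) $$ (i, j)"
      using c ij by simp
    finally show "(mat_adjoint W * W) $$ (i, j) = (c \<cdot>\<^sub>m 1\<^sub>m q) $$ (i, j)" .
  qed (use W_carrier in auto)
  then have "W = 0\<^sub>m q q"
    using d by (intro scalar_gram_with_zero_row[OF W_carrier, of "q - 1"]) (auto simp: W_def)
  then have "W $$ (k, a mod q) = 0"
    using \<open>k < d\<close> d by simp
  then show ?thesis
    using \<open>k < d\<close> d by (simp add: W_def y_def)
qed

definition dim_blocks_below :: "nat \<Rightarrow> sgraph list \<Rightarrow> nat" where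
  "dim_blocks_below q Gs = A_off Gs (min q (Suc (length Gs)))"

lemma cohom_hat_tensor_C_rows_below_zero:
  assumes coh: "cohom (hat_tensor_C H q) (A_nc Gs) Es" and E: "E \<in> set Es"
    and i: "i < dim_blocks_below q Gs" and a: "a < fst H * q"
  shows "E $$ (i, a) = 0"
proof -
  obtain d x k where "1 \<le> d" "d < min q (Suc (length Gs))" "x < fst (Gs ! (d - 1))" "k < d"
    "i = A_off Gs d + x * d + k"
    using i unfolding dim_blocks_below_def by (rule block_index_cases)
  then show ?thesis
    using cohom_hat_tensor_C_small_block_zero[OF coh E, of d x k a] a by simp
qed

definition drop_blocks_below :: "nat \<Rightarrow> sgraph list \<Rightarrow> sgraph list" where
  "drop_blocks_below q Gs = map (\<lambda>i. if Suc i < q then gempty else Gs ! i) [0..<length Gs]"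

lemma length_drop_blocks_below [simp]: "length (drop_blocks_below q Gs) = length Gs"
  by (simp add: drop_blocks_below_def)

lemma drop_blocks_below_nth:
  "1 \<le> d \<Longrightarrow> d \<le> length Gs \<Longrightarrow> drop_blocks_below q Gs ! (d - 1) = (if d < q then gempty else Gs ! (d - 1))"
  by (simp add: drop_blocks_below_def)

lemma A_off_drop_blocks_below:
  assumes "d \<le> Suc (length Gs)"
  shows "A_off Gs d = A_off Gs (min d q) + A_off (drop_blocks_below q Gs) d"
proof -
  let ?g = "\<lambda>d'. fst (Gs ! (d' - 1)) * d'"
  have "A_off Gs d = (\<Sum>d'\<in>{1..<d}. if d' < q then ?g d' else 0) + (\<Sum>d'\<in>{1..<d}. if d' < q then 0 else ?g d')"
    unfolding A_off_def sum.distrib[symmetric] by (intro sum.cong refl) simp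
  also have "(\<Sum>d'\<in>{1..<d}. if d' < q then ?g d' else 0) = A_off Gs (min d q)"
  proof -
    have "{1..<d} \<inter> {d'. d' < q} = {1..<min d q}"
      by auto
    then show ?thesis
      unfolding A_off_def by (simp add: sum.If_cases)
  qed
  also have "(\<Sum>d'\<in>{1..<d}. if d' < q then 0 else ?g d') = A_off (drop_blocks_below q Gs) d"
    unfolding A_off_def
  proof (intro sum.cong refl)
    fix d' assume "d' \<in> {1..<d}"
    then show "(if d' < q then 0 else ?g d') = fst (drop_blocks_below q Gs ! (d' - 1)) * d'"
      using assms drop_blocks_below_nth[of d' Gs q] by (simp add: gempty_def)
  qed
  finally show ?thesis .
qed

lemma A_dim_drop_blocks_below: "A_dim Gs = dim_blocks_below q Gs + A_dim (drop_blocks_below q Gs)"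
  using A_off_drop_blocks_below[of "Suc (length Gs)" Gs q]
  by (simp add: A_dim_eq_A_off dim_blocks_below_def min.commute)

lemma A_gen_drop_blocks_below:
  assumes "q \<le> d" "d \<le> length Gs"
  shows "A_gen Gs d x x' = embed_lower_right (A_dim Gs) (dim_blocks_below q Gs) (A_gen (drop_blocks_below q Gs) d x x')"
proof (rule eq_matI)
  let ?P = "dim_blocks_below q Gs" and ?T = "drop_blocks_below q Gs"
  have off: "A_off Gs d = ?P + A_off ?T d"
    using A_off_drop_blocks_below[of d Gs q] assms by (simp add: dim_blocks_below_def min_def)
  have dim: "A_dim Gs = ?P + A_dim ?T"
    by (rule A_dim_drop_blocks_below)
  fix i j assume "i < dim_row (embed_lower_right (A_dim Gs) ?P (A_gen ?T d x x'))"
    "j < dim_col (embed_lower_right (A_dim Gs) ?P (A_gen ?T d x x'))"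
  then have ij: "i < A_dim Gs" "j < A_dim Gs"
    by (simp_all add: embed_lower_right_def)
  show "A_gen Gs d x x' $$ (i, j) = embed_lower_right (A_dim Gs) ?P (A_gen ?T d x x') $$ (i, j)"
  proof (cases "?P \<le> i \<and> ?P \<le> j")
    case True
    then have "i - ?P < A_dim ?T" "j - ?P < A_dim ?T"
      using ij dim by linarith+
    moreover have "(i = A_off Gs d + x * d + k \<and> j = A_off Gs d + x' * d + k) \<longleftrightarrow>
        (i - ?P = A_off ?T d + x * d + k \<and> j - ?P = A_off ?T d + x' * d + k)" for k
      using True off by linarith
    ultimately show ?thesis
      using True ij by (simp add: A_gen_index embed_lower_right_def)
  next
    case False
    then show ?thesis
      using ij off by (auto simp: A_gen_index embed_lower_right_def)
  qed
qed (simp_all add: embed_lower_right_def)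

lemma embed_lower_right_A_nc_drop_blocks_below:
  assumes A: "A \<in> snd (A_nc (drop_blocks_below q Gs))"
  shows "embed_lower_right (A_dim Gs) (dim_blocks_below q Gs) A \<in> snd (A_nc Gs)"
proof -
  let ?P = "dim_blocks_below q Gs" and ?T = "drop_blocks_below q Gs"
  obtain c where c: "A = mat (A_dim ?T) (A_dim ?T) (\<lambda>(i, j).
      \<Sum>d\<in>{1..length ?T}. \<Sum>x<fst (?T ! (d - 1)). \<Sum>x'<fst (?T ! (d - 1)).
        if gsimeq (?T ! (d - 1)) x x' then c d x x' * A_gen ?T d x x' $$ (i, j) else 0)"
    using A unfolding A_nc_def by auto
  define c' where "c' = (\<lambda>d x x'. if d < q then 0 else c d x x')"
  have dim: "A_dim Gs = ?P + A_dim ?T"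
    by (rule A_dim_drop_blocks_below)
  have "embed_lower_right (A_dim Gs) ?P A $$ (i, j)
      = (\<Sum>d\<in>{1..length Gs}. \<Sum>x<fst (Gs ! (d - 1)). \<Sum>x'<fst (Gs ! (d - 1)).
          if gsimeq (Gs ! (d - 1)) x x' then c' d x x' * A_gen Gs d x x' $$ (i, j) else 0)"
    if ij: "i < A_dim Gs" "j < A_dim Gs" for i j
  proof -
    have "(\<Sum>d\<in>{1..length Gs}. \<Sum>x<fst (Gs ! (d - 1)). \<Sum>x'<fst (Gs ! (d - 1)).
          if gsimeq (Gs ! (d - 1)) x x' then c' d x x' * A_gen Gs d x x' $$ (i, j) else 0)
      = (\<Sum>d\<in>{1..length Gs}. if ?P \<le> i \<and> ?P \<le> j then (\<Sum>x<fst (?T ! (d - 1)). \<Sum>x'<fst (?T ! (d - 1)).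
          if gsimeq (?T ! (d - 1)) x x' then c d x x' * A_gen ?T d x x' $$ (i - ?P, j - ?P) else 0) else 0)"
    proof (intro sum.cong refl)
      fix d assume d: "d \<in> {1..length Gs}"
      show "(\<Sum>x<fst (Gs ! (d - 1)). \<Sum>x'<fst (Gs ! (d - 1)).
            if gsimeq (Gs ! (d - 1)) x x' then c' d x x' * A_gen Gs d x x' $$ (i, j) else 0)
        = (if ?P \<le> i \<and> ?P \<le> j then (\<Sum>x<fst (?T ! (d - 1)). \<Sum>x'<fst (?T ! (d - 1)).
            if gsimeq (?T ! (d - 1)) x x' then c d x x' * A_gen ?T d x x' $$ (i - ?P, j - ?P) else 0) else 0)"
      proof (cases "d < q")
        case True
        then show ?thesis
          using d drop_blocks_below_nth[of d Gs q] by (simp add: c'_def gempty_def)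
      next
        case False
        then have "A_gen Gs d x x' $$ (i, j)
            = (if ?P \<le> i \<and> ?P \<le> j then A_gen ?T d x x' $$ (i - ?P, j - ?P) else 0)" for x x'
          using d ij A_gen_drop_blocks_below[of q d Gs x x'] by (simp add: embed_lower_right_def)
        then show ?thesis
          using False d drop_blocks_below_nth[of d Gs q] by (auto simp: c'_def intro!: sum.cong)
      qed
    qed
    also have "\<dots> = embed_lower_right (A_dim Gs) ?P A $$ (i, j)"
      using c ij dim by (auto simp: embed_lower_right_def)
    finally show ?thesis
      by simp
  qed
  then have "embed_lower_right (A_dim Gs) ?P A = mat (A_dim Gs) (A_dim Gs) (\<lambda>(i, j).
      \<Sum>d\<in>{1..length Gs}. \<Sum>x<fst (Gs ! (d - 1)). \<Sum>x'<fst (Gs ! (d - 1)).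
        if gsimeq (Gs ! (d - 1)) x x' then c' d x x' * A_gen Gs d x x' $$ (i, j) else 0)"
    by (intro eq_matI) (simp_all add: embed_lower_right_def)
  then show ?thesis
    unfolding A_nc_def snd_conv mem_Collect_eq by (rule exI[of _ c'])
qed

lemma cohom_drop_blocks_below:
  assumes coh: "cohom (hat_tensor_C H q) (A_nc Gs) Es" and q: "0 < q"
  shows "cohom (hat_tensor_C H q) (A_nc (drop_blocks_below q Gs))
           (map (drop_rows (dim_blocks_below q Gs)) Es)"
proof -
  let ?P = "dim_blocks_below q Gs" and ?N = "A_dim Gs" and ?T = "hat_tensor_C H q"
  have dim_T: "fst ?T = fst H * q"
    by (rule fst_hat_tensor_C[OF q])
  have dim: "A_dim (drop_blocks_below q Gs) = ?N - ?P" "?P \<le> ?N"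
    using A_dim_drop_blocks_below[of Gs q] by simp_all
  have E_carrier: "E \<in> carrier_mat ?N (fst H * q)" if "E \<in> set Es" for E
    using coh that dim_T unfolding cohom_def A_nc_def by auto
  have gram: "mat_adjoint (drop_rows ?P E) * drop_rows ?P E = mat_adjoint E * E" if "E \<in> set Es" for E
    using adjoint_drop_rows_mult_self[OF E_carrier[OF that] dim(2)]
      cohom_hat_tensor_C_rows_below_zero[OF coh that] by blast
  show ?thesis
    unfolding cohom_def
  proof (intro conjI ballI)
    fix E' assume "E' \<in> set (map (drop_rows ?P) Es)"
    then obtain E where "E \<in> set Es" "E' = drop_rows ?P E"
      by auto
    then show "E' \<in> carrier_mat (fst (A_nc (drop_blocks_below q Gs))) (fst ?T)"
      using drop_rows_carrier[OF E_carrier] dim dim_T by (simp add: A_nc_def)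
  next
    have "foldr (\<lambda>E acc. mat_adjoint E * E + acc) (map (drop_rows ?P) Es) (0\<^sub>m (fst ?T) (fst ?T))
        = foldr (\<lambda>E acc. mat_adjoint E * E + acc) Es (0\<^sub>m (fst ?T) (fst ?T))"
      unfolding foldr_map by (intro foldr_cong) (auto simp: gram)
    then show "foldr (\<lambda>E acc. mat_adjoint E * E + acc) (map (drop_rows ?P) Es) (0\<^sub>m (fst ?T) (fst ?T))
        = 1\<^sub>m (fst ?T)"
      using coh unfolding cohom_def by simp
  next
    fix A X Y assume A: "A \<in> snd (A_nc (drop_blocks_below q Gs))"
      and "X \<in> set (map (drop_rows ?P) Es)" "Y \<in> set (map (drop_rows ?P) Es)"
    then obtain E1 E2 where E: "E1 \<in> set Es" "E2 \<in> set Es" "X = drop_rows ?P E1" "Y = drop_rows ?P E2"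
      by auto
    have "A \<in> carrier_mat (?N - ?P) (?N - ?P)"
      using A dim by (auto simp: A_nc_def)
    then have "mat_adjoint X * A * Y = mat_adjoint E1 * embed_lower_right ?N ?P A * E2"
      using adjoint_drop_rows_mult[OF E_carrier[OF E(1)] E_carrier[OF E(2)] _ dim(2)] E(3,4) by simp
    moreover have "mat_adjoint E1 * embed_lower_right ?N ?P A * E2 \<in> snd ?T"
      using coh E embed_lower_right_A_nc_drop_blocks_below[OF A] unfolding cohom_def by blast
    ultimately show "mat_adjoint X * A * Y \<in> snd ?T"
      by simp
  qed
qed

section \<open>Passing from \<open>f_\<alpha>\<close> to \<open>f_\<beta>\<close>\<close>

lemma is_sgraph_gempty: "is_sgraph gempty"
  by (simp add: is_sgraph_def gempty_def)

lemma Delta_G_gempty: "Delta_G f \<Longrightarrow> f gempty = 0"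
  by (simp add: Delta_G_def)

lemma Delta_G_nonneg: "Delta_G f \<Longrightarrow> is_sgraph G \<Longrightarrow> 0 \<le> f G"
  unfolding Delta_G_def by blast

lemma f_alpha_hat_tensor_C_blocks:
  assumes "f gempty = 0" "0 < q"
  shows "f_alpha f \<alpha> (hat_tensor_C_blocks H q) = f H * real q powr \<alpha>"
proof -
  have "f_alpha f \<alpha> (hat_tensor_C_blocks H q) = (\<Sum>d\<in>{1..q}. if d = q then f H * real q powr \<alpha> else 0)"
    unfolding f_alpha_def length_hat_tensor_C_blocks[OF assms(2)]
  proof (intro sum.cong refl)
    fix d assume "d \<in> {1..q}"
    then show "f (hat_tensor_C_blocks H q ! (d - 1)) * real d powr \<alpha>
        = (if d = q then f H * real q powr \<alpha> else 0)"
      using assms(1) hat_tensor_C_blocks_nth[of d q H] by simp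
  qed
  also have "\<dots> = f H * real q powr \<alpha>"
    using assms(2) by simp
  finally show ?thesis .
qed

lemma f_alpha_drop_blocks_below:
  assumes "f gempty = 0"
  shows "f_alpha f \<alpha> (drop_blocks_below q Gs)
       = (\<Sum>d\<in>{1..length Gs}. if d < q then 0 else f (Gs ! (d - 1)) * real d powr \<alpha>)"
  unfolding f_alpha_def length_drop_blocks_below
proof (intro sum.cong refl)
  fix d assume "d \<in> {1..length Gs}"
  then show "f (drop_blocks_below q Gs ! (d - 1)) * real d powr \<alpha>
      = (if d < q then 0 else f (Gs ! (d - 1)) * real d powr \<alpha>)"
    using assms drop_blocks_below_nth[of d Gs q] by simp
qed

lemma f_alpha_drop_blocks_below_scaled_le:
  assumes "f gempty = 0" "\<forall>G\<in>set Gs. 0 \<le> f G" "\<alpha> \<le> \<beta>" "0 < q"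
  shows "f_alpha f \<alpha> (drop_blocks_below q Gs) * real q powr (\<beta> - \<alpha>) \<le> f_alpha f \<beta> Gs"
proof -
  have term_le: "(if d < q then 0 else f (Gs ! (d - 1)) * real d powr \<alpha>) * real q powr (\<beta> - \<alpha>)
      \<le> f (Gs ! (d - 1)) * real d powr \<beta>" if d: "d \<in> {1..length Gs}" for d
  proof -
    have f_nonneg: "0 \<le> f (Gs ! (d - 1))"
      using assms(2) d by auto
    show ?thesis
    proof (cases "d < q")
      case True
      then show ?thesis
        using f_nonneg by simp
    next
      case False
      then have "real q powr (\<beta> - \<alpha>) \<le> real d powr (\<beta> - \<alpha>)"
        using assms(3,4) by (intro powr_mono2) auto
      then have "f (Gs ! (d - 1)) * real d powr \<alpha> * real q powr (\<beta> - \<alpha>)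
          \<le> f (Gs ! (d - 1)) * (real d powr \<alpha> * real d powr (\<beta> - \<alpha>))"
        unfolding mult.assoc using f_nonneg by (intro mult_left_mono) simp_all
      also have "\<dots> = f (Gs ! (d - 1)) * real d powr \<beta>"
        using d by (simp add: powr_add[symmetric])
      finally show ?thesis
        using False by simp
    qed
  qed
  have "f_alpha f \<alpha> (drop_blocks_below q Gs) * real q powr (\<beta> - \<alpha>)
      = (\<Sum>d\<in>{1..length Gs}. (if d < q then 0 else f (Gs ! (d - 1)) * real d powr \<alpha>) * real q powr (\<beta> - \<alpha>))"
    unfolding f_alpha_drop_blocks_below[of f, OF assms(1)] sum_distrib_right ..
  also have "\<dots> \<le> f_alpha f \<beta> Gs"
    unfolding f_alpha_def using term_le by (rule sum_mono)
  finally show ?thesis .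
qed

theorem corollary3p3:
  fixes f :: "sgraph \<Rightarrow> real" and \<alpha> \<beta> :: real
    and H :: sgraph and Gs :: "sgraph list" and q :: nat
  assumes "Delta_G f"
    and "1 \<le> \<alpha>" and "\<alpha> \<le> \<beta>"
    and "f_alpha_in_Delta_A f \<alpha>"
    and "is_sgraph H" and "\<forall>G\<in>set Gs. is_sgraph G"
    and "0 < q"
    and "ncle (hat_tensor_C H q) (A_nc Gs)"
  shows "f H * real q powr \<beta> \<le> (\<Sum>d\<in>{1..length Gs}. f (Gs ! (d - 1)) * real d powr \<beta>)"
proof -
  have f_gempty: "f gempty = 0"
    using assms(1) by (rule Delta_G_gempty)
  obtain Es where "cohom (hat_tensor_C H q) (A_nc Gs) Es"
    using assms(8) unfolding ncle_def by blast
  then have "ncle (A_nc (hat_tensor_C_blocks H q)) (A_nc (drop_blocks_below q Gs))"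
    using cohom_drop_blocks_below assms(7) unfolding ncle_def hat_tensor_C_eq_A_nc by blast
  moreover have "\<forall>G\<in>set (hat_tensor_C_blocks H q). is_sgraph G" "\<forall>G\<in>set (drop_blocks_below q Gs). is_sgraph G"
    using assms(5,6) is_sgraph_gempty by (auto simp: hat_tensor_C_blocks_def drop_blocks_below_def)
  ultimately have "f H * real q powr \<alpha> \<le> f_alpha f \<alpha> (drop_blocks_below q Gs)"
    using assms(4,7) f_gempty unfolding f_alpha_in_Delta_A_def by (metis f_alpha_hat_tensor_C_blocks)
  then have "f H * real q powr \<alpha> * real q powr (\<beta> - \<alpha>)
      \<le> f_alpha f \<alpha> (drop_blocks_below q Gs) * real q powr (\<beta> - \<alpha>)"
    by (rule mult_right_mono) simp
  then have "f H * real q powr \<beta> \<le> f_alpha f \<alpha> (drop_blocks_below q Gs) * real q powr (\<beta> - \<alpha>)"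
    by (simp add: mult.assoc powr_add[symmetric])
  also have "\<dots> \<le> f_alpha f \<beta> Gs"
    using f_alpha_drop_blocks_below_scaled_le assms Delta_G_nonneg f_gempty by blast
  finally show ?thesis
    unfolding f_alpha_def .
qed

end
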